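(* Assume the Erdős girth conjecture: for every integer $k\ge1$ there are infinitely many $\eta$ for which there exists a graph on $\eta$ vertices with girth $2k+2$ and $\Omega(\eta^{1+1/k})$ edges. Then for every integer $k\ge1$ there are infinitely many $n$ for which there exist an undirected graph $G'$ on $n$ vertices with nonnegative edge weights and a vertex $s$ such that every $f$-EFT $\sigma$-ASPT of $G'$ rooted at $s$ with $f\ge\log n$ and $\sigma<\frac{3k+1}{k+1}$ has $\Omega(n^{1+1/k})$ edges.
   Context: For a weighted graph $G'=(V,E,w)$ with source $s$, an $f$-EFT $\sigma$-ASPT of $G'$ rooted at $s$ is a spanning subgraph $H$ of $G'$ such that for every $F\subseteq E$ with $|F|\le f$ and every vertex $t$, $d_{H-F}(t)\le\sigma\,d_{G'-F}(t)$, where $X-F$ is $X$ with the edges of $F$ removed and $d_X(t)$ is the shortest-path distance from $s$ to $t$ in $X$. Logarithms are base $2$. *)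

theory Defs
  imports Complex_Main "HOL-Library.Extended_Real" "HOL-Library.Extended_Nat"
begin

definition is_graph :: "nat \<Rightarrow> nat set set \<Rightarrow> bool" where
  "is_graph n E \<longleftrightarrow> E \<subseteq> {{u, v} | u v. u \<noteq> v \<and> u < n \<and> v < n}"

definition is_walk :: "nat set set \<Rightarrow> nat list \<Rightarrow> bool" where
  "is_walk E p \<longleftrightarrow> p \<noteq> [] \<and> (\<forall>i < length p - 1. {p ! i, p ! (i + 1)} \<in> E)"

definition walk_weight :: "(nat set \<Rightarrow> real) \<Rightarrow> nat list \<Rightarrow> real" where
  "walk_weight w p = (\<Sum>i < length p - 1. w {p ! i, p ! (i + 1)})"

definition dist :: "nat set set \<Rightarrow> (nat set \<Rightarrow> real) \<Rightarrow> nat \<Rightarrow> nat \<Rightarrow> ereal" where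
  "dist E w s t = (INF p \<in> {p. is_walk E p \<and> hd p = s \<and> last p = t}. ereal (walk_weight w p))"

definition is_cycle :: "nat set set \<Rightarrow> nat list \<Rightarrow> bool" where
  "is_cycle E c \<longleftrightarrow> 3 \<le> length c \<and> distinct c \<and>
     (\<forall>i < length c. {c ! i, c ! ((i + 1) mod length c)} \<in> E)"

definition girth :: "nat set set \<Rightarrow> enat" where
  "girth E = (INF c \<in> {c. is_cycle E c}. enat (length c))"

definition is_EFT_ASPT ::
  "nat \<Rightarrow> nat set set \<Rightarrow> (nat set \<Rightarrow> real) \<Rightarrow> nat \<Rightarrow> nat \<Rightarrow> real \<Rightarrow> nat set set \<Rightarrow> bool" where
  "is_EFT_ASPT n E w s f \<sigma> H \<longleftrightarrow> H \<subseteq> E \<and>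
     (\<forall>F. F \<subseteq> E \<and> card F \<le> f \<longrightarrow>
        (\<forall>t < n. dist (H - F) w s t \<le> ereal \<sigma> * dist (E - F) w s t))"

end

theory Submission
  imports Defs
begin

text \<open>Hang the vertices of a graph \<open>E0\<close> of girth \<open>2k + 2\<close> on \<open>\<eta> \<le> 2\<^sup>L\<close> vertices as
  the leaves of a complete binary tree of depth \<open>L\<close> rooted at \<open>s\<close>, giving \<open>n = 2 ^ (L + 1) \<le> 4\<eta>\<close>
  vertices. Tree edges into leaves weigh \<open>k\<close>, the other tree edges \<open>0\<close>, and the edges of \<open>E0\<close>
  weigh \<open>1\<close>. For an edge \<open>xy\<close> of \<open>E0\<close>, fail the \<open>L = log n - 1\<close> tree edges hanging off the path
  from \<open>s\<close> to the leaf \<open>x\<close>. Then \<open>y\<close> is reached at cost \<open>k + 1\<close> through \<open>x\<close>, whereas without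
  \<open>xy\<close> a route from \<open>x\<close> to \<open>y\<close> needs at least \<open>2k + 1\<close> edges of \<open>E0\<close> by the girth, and every
  detour through the tree costs \<open>2k\<close>; a potential function turns this into the bound \<open>3k + 1\<close>.
  As \<open>\<sigma>(k + 1) < 3k + 1\<close>, every such ASPT contains all of \<open>E0\<close>.\<close>

section \<open>Walks, distances and potentials\<close>

lemma is_walk_snoc:
  assumes "q \<noteq> []"
  shows "is_walk E (q @ [z]) \<longleftrightarrow> is_walk E q \<and> {last q, z} \<in> E"
proof -
  obtain n where n: "length q = Suc n" using assms by (cases q) auto
  then have "last q = q ! n" using assms by (simp add: last_conv_nth)
  then show ?thesis unfolding is_walk_def using n All_less_Suc
    by (auto simp: nth_append)
qed

lemma walk_weight_snoc:
  assumes "q \<noteq> []"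
  shows "walk_weight w (q @ [z]) = walk_weight w q + w {last q, z}"
proof -
  obtain n where n: "length q = Suc n" using assms by (cases q) auto
  then have "last q = q ! n" using assms by (simp add: last_conv_nth)
  moreover have "(\<Sum>i < n. w {(q @ [z]) ! i, (q @ [z]) ! (i + 1)}) = walk_weight w q"
    unfolding walk_weight_def n by (rule sum.cong) (auto simp: nth_append n)
  ultimately show ?thesis unfolding walk_weight_def by (simp add: n nth_append)
qed

lemma is_walk_take: "is_walk E q \<Longrightarrow> 1 \<le> m \<Longrightarrow> is_walk E (take m q)"
  unfolding is_walk_def by (auto simp: nth_take)

lemma is_walk_mono: "is_walk E p \<Longrightarrow> E \<subseteq> E' \<Longrightarrow> is_walk E' p"
  unfolding is_walk_def by blast

lemma is_walk_distinct_shortcut: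
  "is_walk E p \<Longrightarrow>
    \<exists>q. is_walk E q \<and> hd q = hd p \<and> last q = last p \<and> distinct q \<and> length q \<le> length p"
proof (induction p rule: rev_induct)
  case Nil
  then show ?case by (simp add: is_walk_def)
next
  case (snoc z p)
  show ?case
  proof (cases "p = []")
    case True
    then show ?thesis using snoc.prems by (intro exI[of _ "[z]"]) (auto simp: is_walk_def)
  next
    case False
    with snoc.prems have "is_walk E p" and edge: "{last p, z} \<in> E"
      by (auto simp: is_walk_snoc)
    with snoc.IH obtain q where q: "is_walk E q" "hd q = hd p" "last q = last p" "distinct q"
      "length q \<le> length p" by blast
    have "q \<noteq> []" using q(1) by (simp add: is_walk_def)
    show ?thesis
    proof (cases "z \<in> set q")
      case True
      then obtain i where i: "i < length q" "q ! i = z" by (auto simp: in_set_conv_nth)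
      have "last (take (Suc i) q) = z" using i by (simp add: take_Suc_conv_app_nth)
      then show ?thesis
        using q i is_walk_take[OF q(1), of "Suc i"] \<open>q \<noteq> []\<close> \<open>p \<noteq> []\<close>
        by (intro exI[of _ "take (Suc i) q"]) auto
    next
      case False
      then show ?thesis
        using q \<open>q \<noteq> []\<close> \<open>p \<noteq> []\<close> edge by (intro exI[of _ "q @ [z]"]) (auto simp: is_walk_snoc)
    qed
  qed
qed

lemma dist_le_walk_weight:
  "is_walk E p \<Longrightarrow> hd p = s \<Longrightarrow> last p = t \<Longrightarrow> dist E w s t \<le> ereal (walk_weight w p)"
  unfolding dist_def by (rule INF_lower) auto

lemma dist_antimono: "E \<subseteq> E' \<Longrightarrow> dist E' w s t \<le> dist E w s t"
  unfolding dist_def by (rule INF_superset_mono) (auto intro: is_walk_mono)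

lemma walk_weight_ge_potential:
  assumes "is_walk E p" and "\<And>u v. {u, v} \<in> E \<Longrightarrow> \<phi> v - \<phi> u \<le> w {u, v}"
  shows "\<phi> (last p) - \<phi> (hd p) \<le> walk_weight w p"
proof -
  have "p \<noteq> []" using assms(1) by (simp add: is_walk_def)
  then have "\<phi> (last p) - \<phi> (hd p) = (\<Sum>i < length p - 1. \<phi> (p ! Suc i) - \<phi> (p ! i))"
    using sum_lessThan_telescope[of "\<lambda>i. \<phi> (p ! i)" "length p - 1"]
    by (simp add: last_conv_nth hd_conv_nth)
  also have "\<dots> \<le> walk_weight w p"
    unfolding walk_weight_def using assms unfolding is_walk_def by (intro sum_mono) auto
  finally show ?thesis .
qed

lemma potential_le_dist:
  assumes "\<And>u v. {u, v} \<in> E \<Longrightarrow> \<phi> v - \<phi> u \<le> w {u, v}"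
  shows "ereal (\<phi> t - \<phi> s) \<le> dist E w s t"
  unfolding dist_def using walk_weight_ge_potential[of E _ \<phi> w] assms
  by (intro INF_greatest) auto

lemma girth_le_detour:
  assumes "is_graph n E" "{x, y} \<in> E" "is_walk (E - {{x, y}}) p" "hd p = x" "last p = y"
  shows "girth E \<le> enat (length p)"
proof -
  from assms(1,2) have "x \<noteq> y" unfolding is_graph_def by (auto simp: doubleton_eq_iff)
  from is_walk_distinct_shortcut[OF assms(3)] obtain q where
    q: "is_walk (E - {{x, y}}) q" "hd q = x" "last q = y" "distinct q" "length q \<le> length p"
    using assms(4,5) by auto
  have "q \<noteq> []" using q(1) by (simp add: is_walk_def)
  have "length q \<noteq> 1" using q(2,3) \<open>x \<noteq> y\<close> \<open>q \<noteq> []\<close> by (cases q) auto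
  moreover have "length q \<noteq> 2"
  proof
    assume "length q = 2"
    then have "q ! 0 = x" "q ! 1 = y" using q(2,3) \<open>q \<noteq> []\<close>
      by (auto simp: hd_conv_nth last_conv_nth)
    moreover have "{q ! 0, q ! (0 + 1)} \<in> E - {{x, y}}"
      using q(1) \<open>length q = 2\<close> unfolding is_walk_def by auto
    ultimately show False by simp
  qed
  ultimately have "3 \<le> length q" using \<open>q \<noteq> []\<close> by (cases "length q") auto
  have "is_cycle E q" unfolding is_cycle_def
  proof (intro conjI allI impI)
    fix i assume i: "i < length q"
    show "{q ! i, q ! ((i + 1) mod length q)} \<in> E"
    proof (cases "i = length q - 1")
      case True
      then show ?thesis using q(2,3) \<open>q \<noteq> []\<close> assms(2)
        by (simp add: hd_conv_nth last_conv_nth insert_commute)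
    next
      case False
      then show ?thesis using q(1) i unfolding is_walk_def by auto
    qed
  qed fact+
  then have "girth E \<le> enat (length q)" unfolding girth_def by (rule INF_lower[OF CollectI])
  with q(5) show ?thesis by (meson enat_ord_simps(1) order_trans)
qed

section \<open>Hop distance capped at a bound\<close>

text \<open>The number of edges on a shortest walk from \<open>x\<close> to \<open>z\<close>, or \<open>m\<close> if that is larger; the
  disjunct \<open>j = m\<close> keeps the \<open>LEAST\<close> meaningful when \<open>z\<close> is unreachable.\<close>
definition capped_hops :: "nat set set \<Rightarrow> nat \<Rightarrow> nat \<Rightarrow> nat \<Rightarrow> nat" where
  "capped_hops E x m z =
     (LEAST j. j = m \<or> (\<exists>p. is_walk E p \<and> hd p = x \<and> last p = z \<and> length p = Suc j))"

lemma capped_hops_le: "capped_hops E x m z \<le> m"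
  unfolding capped_hops_def by (rule Least_le) simp

lemma capped_hops_source: "capped_hops E x m x = 0"
  unfolding capped_hops_def by (rule Least_eq_0) (auto intro!: exI[of _ "[x]"] simp: is_walk_def)

lemma capped_hops_cases:
  obtains "capped_hops E x m z = m"
  | p where "is_walk E p" "hd p = x" "last p = z" "length p = Suc (capped_hops E x m z)"
  using LeastI[of "\<lambda>j. j = m \<or> (\<exists>p. is_walk E p \<and> hd p = x \<and> last p = z \<and> length p = Suc j)" m]
  unfolding capped_hops_def by auto

lemma capped_hops_le_walk:
  "is_walk E p \<Longrightarrow> hd p = x \<Longrightarrow> last p = z \<Longrightarrow> capped_hops E x m z \<le> length p - 1"
  unfolding capped_hops_def by (rule Least_le) (auto simp: is_walk_def)

lemma capped_hops_pos:
  assumes "1 \<le> m" "z \<noteq> x"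
  shows "1 \<le> capped_hops E x m z"
proof (cases rule: capped_hops_cases[of E x m z])
  case (2 p)
  show ?thesis
  proof (rule ccontr)
    assume "\<not> 1 \<le> capped_hops E x m z"
    then have "length p = 1" using 2 by simp
    then have "hd p = last p" by (cases p) auto
    then show False using 2 assms by simp
  qed
qed (use assms in simp)

lemma capped_hops_edge:
  assumes "{u, v} \<in> E"
  shows "capped_hops E x m v \<le> capped_hops E x m u + 1"
proof (cases rule: capped_hops_cases[of E x m u])
  case 1
  then show ?thesis using capped_hops_le[of E x m v] by simp
next
  case (2 p)
  then have "p \<noteq> []" by (simp add: is_walk_def)
  then have "is_walk E (p @ [v])" using 2 assms by (simp add: is_walk_snoc)
  then show ?thesis using capped_hops_le_walk[of E "p @ [v]" x v m] 2 \<open>p \<noteq> []\<close> by simp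
qed

lemma capped_hops_far:
  assumes "\<And>p. is_walk E p \<Longrightarrow> hd p = x \<Longrightarrow> last p = z \<Longrightarrow> m < length p"
  shows "capped_hops E x m z = m"
  using capped_hops_le[of E x m z] by (cases rule: capped_hops_cases[of E x m z]) (auto dest: assms)

section \<open>Arithmetic of heap numbering\<close>

lemma div_two_power_less:
  fixes m :: nat
  assumes "1 \<le> m div 2 ^ i" "i < j"
  shows "m div 2 ^ j < m div 2 ^ i"
proof -
  have "m div 2 ^ j = m div 2 ^ i div 2 ^ (j - i)"
    using assms(2) by (metis div_mult2_eq le_add_diff_inverse less_imp_le power_add)
  also have "\<dots> < m div 2 ^ i"
    using assms one_less_power[of "2::nat" "j - i"] by (intro div_less_dividend) auto
  finally show ?thesis .
qed

lemma div_two_power_inj: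
  fixes m :: nat
  assumes "m div 2 ^ i = m div 2 ^ j" "1 \<le> m div 2 ^ i"
  shows "i = j"
  using div_two_power_less[of m i j] div_two_power_less[of m j i] assms
  by (cases i j rule: linorder_cases) auto

lemma div_two_power_Suc: "(m::nat) div 2 ^ Suc i = m div 2 ^ i div 2"
  by (metis div_mult2_eq power_Suc2)

definition sibling :: "nat \<Rightarrow> nat" where
  "sibling d = (if even d then d + 1 else d - 1)"

lemma sibling_div_two: "1 \<le> d \<Longrightarrow> sibling d div 2 = d div 2"
  unfolding sibling_def by auto presburger+

lemma sibling_neq: "1 \<le> d \<Longrightarrow> sibling d \<noteq> d"
  unfolding sibling_def by auto

lemma sibling_unique: "c div 2 = d div 2 \<Longrightarrow> c \<noteq> d \<Longrightarrow> c = sibling d"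
  unfolding sibling_def by presburger

lemma sibling_bounds: "2 \<le> d \<Longrightarrow> d < 2 * M \<Longrightarrow> 2 \<le> sibling d \<and> sibling d < 2 * M"
  unfolding sibling_def by presburger

section \<open>The lower-bound construction\<close>

text \<open>Vertices \<open>1, \<dots>, 2N - 1\<close> form a complete binary tree in heap numbering (root \<open>1\<close>,
  parent of \<open>c\<close> is \<open>c div 2\<close>, leaves \<open>N, \<dots>, 2N - 1\<close>); vertex \<open>0\<close> is isolated. The girth
  graph \<open>E0\<close> is copied onto the leaves by the shift \<open>v \<mapsto> N + v\<close>.\<close>
locale girth_tree =
  fixes k \<eta> L :: nat and E0 :: "nat set set"
  assumes graph: "is_graph \<eta> E0" and girth: "girth E0 = enat (2 * k + 2)"
    and eta_le: "\<eta> \<le> 2 ^ L"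
begin

definition N :: nat where "N = 2 ^ L"

definition tree_edges :: "nat set set" where
  "tree_edges = {{c div 2, c} | c. 2 \<le> c \<and> c < 2 * N}"

definition lifted_edges :: "nat set set" where
  "lifted_edges = (\<lambda>e. (+) N ` e) ` E0"

definition edges :: "nat set set" where
  "edges = tree_edges \<union> lifted_edges"

definition weight :: "nat set \<Rightarrow> real" where
  "weight e = (if e \<in> lifted_edges then 1 else if \<exists>h\<in>e. N \<le> h then real k else 0)"

lemma lifted_edgeE:
  assumes "e \<in> lifted_edges"
  obtains p q where "e = {N + p, N + q}" "{p, q} \<in> E0" "p \<noteq> q" "p < \<eta>" "q < \<eta>"
proof -
  obtain e0 where e0: "e0 \<in> E0" "e = (+) N ` e0" using assms unfolding lifted_edges_def by auto
  with graph obtain p q where "e0 = {p, q}" "p \<noteq> q" "p < \<eta>" "q < \<eta>"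
    unfolding is_graph_def by blast
  then show ?thesis using e0 that by auto
qed

lemma lifted_edge_ge: "e \<in> lifted_edges \<Longrightarrow> h \<in> e \<Longrightarrow> N \<le> h"
  unfolding lifted_edges_def by auto

lemma tree_edge_not_lifted: "2 \<le> c \<Longrightarrow> c < 2 * N \<Longrightarrow> {c div 2, c} \<notin> lifted_edges"
  using lifted_edge_ge[of "{c div 2, c}" "c div 2"] by auto

lemma weight_tree_edge:
  "2 \<le> c \<Longrightarrow> c < 2 * N \<Longrightarrow> weight {c div 2, c} = (if N \<le> c then real k else 0)"
  unfolding weight_def using tree_edge_not_lifted by auto

lemma weight_lifted_edge: "e \<in> lifted_edges \<Longrightarrow> weight e = 1"
  unfolding weight_def by simp

lemma weight_nonneg: "0 \<le> weight e"
  unfolding weight_def by auto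

lemma is_graph_edges: "is_graph (2 * N) edges"
proof -
  have "tree_edges \<subseteq> {{u, v} | u v. u \<noteq> v \<and> u < 2 * N \<and> v < 2 * N}"
    unfolding tree_edges_def by fastforce
  moreover have "lifted_edges \<subseteq> {{u, v} | u v. u \<noteq> v \<and> u < 2 * N \<and> v < 2 * N}"
  proof
    fix e assume "e \<in> lifted_edges"
    then obtain p q where "e = {N + p, N + q}" "{p, q} \<in> E0" "p \<noteq> q" "p < \<eta>" "q < \<eta>"
      by (rule lifted_edgeE)
    then show "e \<in> {{u, v} | u v. u \<noteq> v \<and> u < 2 * N \<and> v < 2 * N}"
      using eta_le unfolding N_def by force
  qed
  ultimately show ?thesis unfolding is_graph_def edges_def by blast
qed

lemma finite_edges: "finite edges"
proof (rule finite_subset)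
  show "edges \<subseteq> Pow {..<2 * N}" using is_graph_edges unfolding is_graph_def by auto
qed simp

lemma card_lifted_edges: "card lifted_edges = card E0"
  unfolding lifted_edges_def by (rule card_image) (simp add: inj_on_def inj_image_eq_iff)

end

locale girth_tree_edge = girth_tree +
  fixes x y :: nat
  assumes edge: "{x, y} \<in> E0"
begin

definition a :: nat where "a = N + x"
definition b :: nat where "b = N + y"

definition ancestors :: "nat set" where
  "ancestors = {a div 2 ^ i | i. i \<le> L}"

text \<open>The edges from the root-to-\<open>a\<close> path to the siblings of its vertices: these \<open>L\<close> faults cut
  every path in the tree from the root to a leaf other than \<open>a\<close>.\<close>
definition faults :: "nat set set" where
  "faults = (\<lambda>i. {a div 2 ^ i div 2, sibling (a div 2 ^ i)}) ` {..<L}"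

abbreviation hops :: "nat \<Rightarrow> nat" where
  "hops \<equiv> capped_hops (E0 - {{x, y}}) x (2 * k + 1)"

text \<open>The certificate for the lower bound: the potential rises by \<open>3k + 1\<close> from the root to \<open>b\<close>,
  but by at most the weight along any edge other than \<open>ab\<close> and the faults.\<close>
definition potential :: "nat \<Rightarrow> real" where
  "potential h = (if N \<le> h then real k + real (hops (h - N))
                  else if h \<in> ancestors then 0 else real (2 * k + 1))"

lemma edge_ends: "x \<noteq> y" "x < \<eta>" "y < \<eta>"
  using graph edge unfolding is_graph_def by (auto simp: doubleton_eq_iff)

lemma leaf_bounds: "N \<le> a" "a < 2 * N" "N \<le> b" "b < 2 * N" "a \<noteq> b"
  using edge_ends eta_le unfolding a_def b_def N_def by auto

lemma L_pos: "1 \<le> L"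
  using edge_ends eta_le by (cases L) auto

lemma root_ancestor: "a div 2 ^ L = 1"
proof -
  have "x < N" using edge_ends eta_le unfolding N_def by simp
  then have "a div N = 1" unfolding a_def by simp
  then show ?thesis unfolding N_def .
qed

lemma ancestor_pos: "i \<le> L \<Longrightarrow> 1 \<le> a div 2 ^ i"
  using div_le_mono2[of "2 ^ i" "2 ^ L" a] root_ancestor by simp

lemma ancestor_ge_2: "i < L \<Longrightarrow> 2 \<le> a div 2 ^ i"
  using div_two_power_less[of a i L] ancestor_pos[of i] root_ancestor by simp

lemma proper_ancestor_less: "1 \<le> i \<Longrightarrow> a div 2 ^ i < N"
proof -
  assume "1 \<le> i"
  then have "a div 2 ^ i \<le> a div 2"
    using power_increasing[of 1 i "2::nat"] div_le_mono2[of 2 "2 ^ i" a] by simp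
  then show ?thesis using leaf_bounds by linarith
qed

lemma a_ancestor: "a \<in> ancestors"
  unfolding ancestors_def by (intro CollectI exI[of _ 0]) simp

lemma one_ancestor: "1 \<in> ancestors"
  unfolding ancestors_def using root_ancestor[symmetric] by blast

lemma parent_ancestor: "c \<in> ancestors \<Longrightarrow> 2 \<le> c \<Longrightarrow> c div 2 \<in> ancestors \<and> c < 2 * N"
proof -
  assume c: "c \<in> ancestors" "2 \<le> c"
  then obtain i where i: "i \<le> L" "c = a div 2 ^ i" unfolding ancestors_def by auto
  have "i \<noteq> L" using i c root_ancestor by auto
  then have "c div 2 = a div 2 ^ Suc i" "Suc i \<le> L" using i div_two_power_Suc[of a i] by auto
  then have "c div 2 \<in> ancestors" unfolding ancestors_def by blast
  moreover have "c < 2 * N" using i leaf_bounds div_le_dividend[of a "2 ^ i"] by linarith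
  ultimately show ?thesis ..
qed

lemma ancestor_leaf:
  assumes "c \<in> ancestors" "N \<le> c"
  shows "c = a"
proof -
  obtain i where "c = a div 2 ^ i" using assms(1) unfolding ancestors_def by auto
  moreover have "i = 0" using proper_ancestor_less[of i] assms(2) \<open>c = a div 2 ^ i\<close> by linarith
  ultimately show ?thesis by simp
qed

lemma sibling_not_ancestor: "i < L \<Longrightarrow> sibling (a div 2 ^ i) \<notin> ancestors"
proof
  let ?d = "a div 2 ^ i"
  assume i: "i < L" and "sibling ?d \<in> ancestors"
  then obtain m where m: "sibling ?d = a div 2 ^ m" unfolding ancestors_def by auto
  have d: "2 \<le> ?d" using ancestor_ge_2[OF i] .
  have "a div 2 ^ Suc m = sibling ?d div 2" by (simp only: m div_two_power_Suc)
  also have "\<dots> = a div 2 ^ Suc i" using sibling_div_two[of ?d] d by (simp only: div_two_power_Suc)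
  finally have "a div 2 ^ Suc m = a div 2 ^ Suc i" .
  moreover have "1 \<le> a div 2 ^ Suc i" using d by (simp only: div_two_power_Suc)
  ultimately have "m = i" using div_two_power_inj[of a "Suc m" "Suc i"] by simp
  then show False using m sibling_neq[of ?d] d by simp
qed

lemma faults_subset: "faults \<subseteq> tree_edges"
proof
  fix e assume "e \<in> faults"
  then obtain i where i: "i < L" "e = {a div 2 ^ i div 2, sibling (a div 2 ^ i)}"
    unfolding faults_def by auto
  let ?d = "a div 2 ^ i"
  have "2 \<le> ?d" "?d < 2 * N"
    using ancestor_ge_2[OF i(1)] leaf_bounds div_le_dividend[of a "2 ^ i"] by linarith+
  then have "2 \<le> sibling ?d" "sibling ?d < 2 * N" "e = {sibling ?d div 2, sibling ?d}"
    using sibling_bounds sibling_div_two i by auto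
  then show "e \<in> tree_edges" unfolding tree_edges_def by blast
qed

lemma card_faults: "card faults \<le> L"
  unfolding faults_def using card_image_le[of "{..<L}"] by auto

lemma fault_if_leaving_ancestors:
  assumes c: "2 \<le> c" "c < 2 * N" "c div 2 \<in> ancestors" "c \<notin> ancestors"
  shows "{c div 2, c} \<in> faults"
proof -
  obtain j where j: "j \<le> L" "c div 2 = a div 2 ^ j" using c unfolding ancestors_def by auto
  have "j \<noteq> 0" using j c leaf_bounds by (intro notI) simp
  then obtain i where i: "j = Suc i" by (cases j) auto
  let ?d = "a div 2 ^ i"
  have "?d \<in> ancestors" unfolding ancestors_def using i j by auto
  moreover have "c div 2 = ?d div 2" using j i div_two_power_Suc[of a i] by simp
  ultimately have "c = sibling ?d" using sibling_unique c by metis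
  then have "{c div 2, c} = {?d div 2, sibling ?d}" using \<open>c div 2 = ?d div 2\<close> by simp
  then show ?thesis unfolding faults_def using i j by auto
qed

lemma ancestor_edge_not_fault:
  assumes c: "c \<in> ancestors" "2 \<le> c"
  shows "{c div 2, c} \<notin> faults"
proof
  assume "{c div 2, c} \<in> faults"
  then obtain i where i: "i < L" "{c div 2, c} = {a div 2 ^ i div 2, sibling (a div 2 ^ i)}"
    unfolding faults_def by auto
  let ?d = "a div 2 ^ i"
  have d: "2 \<le> ?d" using ancestor_ge_2[OF i(1)] .
  from i(2) consider "c = sibling ?d" | "c div 2 = sibling ?d" "c = ?d div 2"
    by (auto simp: doubleton_eq_iff)
  then show False
  proof cases
    case 1
    then show ?thesis using sibling_not_ancestor[OF i(1)] c by simp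
  next
    case 2
    then have "2 * c \<le> sibling ?d" using sibling_div_two[of ?d] d by simp
    then show ?thesis using 2 c(2) by simp
  qed
qed

lemma hops_far_end: "hops y = 2 * k + 1"
proof (rule capped_hops_far)
  fix p assume "is_walk (E0 - {{x, y}}) p" "hd p = x" "last p = y"
  then have "girth E0 \<le> enat (length p)" by (rule girth_le_detour[OF graph edge])
  then show "2 * k + 1 < length p" using girth by simp
qed

lemma hops_bounds: "z \<noteq> x \<Longrightarrow> 1 \<le> hops z \<and> hops z \<le> 2 * k + 1"
  using capped_hops_pos capped_hops_le by simp

lemma potential_tree_edge:
  assumes c: "2 \<le> c" "c < 2 * N" "{c div 2, c} \<notin> faults"
  shows "\<bar>potential c - potential (c div 2)\<bar> \<le> weight {c div 2, c}"
proof -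
  have "c div 2 < N" using c(2) by linarith
  have w: "weight {c div 2, c} = (if N \<le> c then real k else 0)" using weight_tree_edge c by simp
  show ?thesis
  proof (cases "c \<in> ancestors")
    case True
    then have "potential (c div 2) = 0"
      using parent_ancestor c \<open>c div 2 < N\<close> unfolding potential_def by simp
    moreover have "potential c = real k" if "N \<le> c"
    proof -
      have "c - N = x" using ancestor_leaf[OF True that] unfolding a_def by simp
      then show ?thesis using that unfolding potential_def by (simp add: capped_hops_source)
    qed
    ultimately show ?thesis using w True unfolding potential_def by auto
  next
    case False
    then have parent: "potential (c div 2) = real (2 * k + 1)"
      using fault_if_leaving_ancestors c \<open>c div 2 < N\<close> unfolding potential_def by auto
    show ?thesis
    proof (cases "N \<le> c")
      case True
      then have "c - N \<noteq> x" using False a_ancestor unfolding a_def by auto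
      then have "1 \<le> real (hops (c - N))" "real (hops (c - N)) \<le> 2 * real k + 1"
        using hops_bounds[of "c - N"] by simp_all
      then show ?thesis using w True parent by (simp add: potential_def[of c] abs_le_iff)
    qed (use w False parent in \<open>simp add: potential_def[of c]\<close>)
  qed
qed

lemma potential_lipschitz:
  assumes "{u, v} \<in> edges - faults - {{a, b}}"
  shows "potential v - potential u \<le> weight {u, v}"
proof (cases "{u, v} \<in> tree_edges")
  case True
  then obtain c where c: "{u, v} = {c div 2, c}" "2 \<le> c" "c < 2 * N"
    unfolding tree_edges_def by auto
  then have "\<bar>potential c - potential (c div 2)\<bar> \<le> weight {c div 2, c}"
    using potential_tree_edge assms by auto
  then show ?thesis using c(1) by (auto simp: doubleton_eq_iff insert_commute)
next
  case False
  then have g: "{u, v} \<in> lifted_edges" "{u, v} \<noteq> {a, b}" using assms unfolding edges_def by auto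
  from g(1) obtain p q where pq: "{u, v} = {N + p, N + q}" "{p, q} \<in> E0" "p \<noteq> q" "p < \<eta>" "q < \<eta>"
    by (rule lifted_edgeE)
  have "{p, q} \<noteq> {x, y}" using pq g(2) unfolding a_def b_def by auto
  then have "{p, q} \<in> E0 - {{x, y}}" "{q, p} \<in> E0 - {{x, y}}"
    using pq by (auto simp: insert_commute)
  then have "hops q \<le> hops p + 1" "hops p \<le> hops q + 1"
    by (metis capped_hops_edge)+
  then have "\<bar>real (hops q) - real (hops p)\<bar> \<le> 1" by linarith
  moreover have "weight {u, v} = 1" using g weight_lifted_edge by simp
  moreover have "potential (N + r) = real k + real (hops r)" for r
    unfolding potential_def by simp
  ultimately show ?thesis using pq(1) by (auto simp: doubleton_eq_iff insert_commute)
qed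

lemma dist_avoiding_edge: "ereal (real (3 * k + 1)) \<le> dist (edges - faults - {{a, b}}) weight 1 b"
proof -
  have "potential b = real (3 * k + 1)"
    using leaf_bounds hops_far_end unfolding potential_def b_def by simp
  moreover have "potential 1 = 0"
    using one_ancestor one_less_power[of "2::nat" L] L_pos unfolding potential_def N_def by simp
  moreover have "ereal (potential b - potential 1) \<le> dist (edges - faults - {{a, b}}) weight 1 b"
    by (rule potential_le_dist) (rule potential_lipschitz)
  ultimately show ?thesis by simp
qed

definition root_path :: "nat \<Rightarrow> nat list" where
  "root_path m = map (\<lambda>i. a div 2 ^ (L - i)) [0..<Suc m]"

lemma root_path_hd: "hd (root_path m) = 1"
  unfolding root_path_def using root_ancestor by (simp add: upt_conv_Cons del: upt_Suc)

lemma root_path_last: "last (root_path m) = a div 2 ^ (L - m)"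
  unfolding root_path_def by (simp add: last_map)

lemma root_path_walk:
  "m \<le> L \<Longrightarrow> is_walk (edges - faults) (root_path m) \<and>
     walk_weight weight (root_path m) = (if m = L then real k else 0)"
proof (induction m)
  case 0
  then show ?case using L_pos by (simp add: root_path_def is_walk_def walk_weight_def)
next
  case (Suc m)
  let ?c = "a div 2 ^ (L - Suc m)"
  have IH: "is_walk (edges - faults) (root_path m)" "walk_weight weight (root_path m) = 0"
    using Suc by auto
  have ne: "root_path m \<noteq> []" by (simp add: root_path_def)
  have snoc: "root_path (Suc m) = root_path m @ [?c]" by (simp add: root_path_def)
  have "?c \<in> ancestors" unfolding ancestors_def by auto
  have c: "2 \<le> ?c" "?c < 2 * N"
    using ancestor_ge_2[of "L - Suc m"] Suc.prems leaf_bounds div_le_dividend[of a "2 ^ (L - Suc m)"]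
    by linarith+
  have "?c div 2 = a div 2 ^ (L - m)"
    using div_two_power_Suc[of a "L - Suc m"] Suc.prems by (simp add: Suc_diff_Suc)
  then have last_edge: "{last (root_path m), ?c} = {?c div 2, ?c}" by (simp add: root_path_last)
  have "{?c div 2, ?c} \<in> edges - faults"
    using c ancestor_edge_not_fault[OF \<open>?c \<in> ancestors\<close> c(1)]
    unfolding edges_def tree_edges_def by blast
  then have "is_walk (edges - faults) (root_path (Suc m))"
    using IH(1) last_edge by (simp add: snoc is_walk_snoc[OF ne])
  moreover have "N \<le> ?c \<longleftrightarrow> Suc m = L"
    using proper_ancestor_less[of "L - Suc m"] leaf_bounds Suc.prems by (cases "L - Suc m") auto
  then have "weight {last (root_path m), ?c} = (if Suc m = L then real k else 0)"
    using last_edge weight_tree_edge[OF c] by simp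
  ultimately show ?case using IH(2) by (simp add: snoc walk_weight_snoc[OF ne])
qed

lemma dist_through_edge: "dist (edges - faults) weight 1 b \<le> ereal (real k + 1)"
proof -
  let ?p = "root_path L @ [b]"
  have ne: "root_path L \<noteq> []" by (simp add: root_path_def)
  have ab: "{a, b} \<in> lifted_edges"
    unfolding lifted_edges_def a_def b_def by (rule image_eqI[OF _ edge]) simp
  have "{a, b} \<notin> faults"
  proof
    assume "{a, b} \<in> faults"
    then obtain c where "{a, b} = {c div 2, c}" "2 \<le> c" "c < 2 * N"
      using faults_subset unfolding tree_edges_def by blast
    then show False using tree_edge_not_lifted ab by simp
  qed
  then have "is_walk (edges - faults) ?p"
    using root_path_walk[of L] ab root_path_last[of L] unfolding edges_def
    by (simp add: is_walk_snoc[OF ne])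
  moreover have "walk_weight weight ?p = real k + 1"
    using root_path_walk[of L] root_path_last[of L] weight_lifted_edge[OF ab]
    by (simp add: walk_weight_snoc[OF ne])
  moreover have "hd ?p = 1" using ne root_path_hd by simp
  ultimately show ?thesis using dist_le_walk_weight[of "edges - faults" ?p 1 b weight] by simp
qed

lemma edge_mem_EFT_ASPT:
  assumes H: "is_EFT_ASPT (2 * N) edges weight 1 f \<sigma> H"
    and "L \<le> f" "0 \<le> \<sigma>" "\<sigma> * (real k + 1) < real (3 * k + 1)"
  shows "{a, b} \<in> H"
proof (rule ccontr)
  assume "{a, b} \<notin> H"
  then have "H - faults \<subseteq> edges - faults - {{a, b}}" using H unfolding is_EFT_ASPT_def by blast
  then have "ereal (real (3 * k + 1)) \<le> dist (H - faults) weight 1 b"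
    by (rule order_trans[OF dist_avoiding_edge dist_antimono])
  also have "\<dots> \<le> ereal \<sigma> * dist (edges - faults) weight 1 b"
  proof -
    have "faults \<subseteq> edges" "card faults \<le> f"
      using faults_subset card_faults \<open>L \<le> f\<close> unfolding edges_def by auto
    then show ?thesis using H leaf_bounds unfolding is_EFT_ASPT_def by blast
  qed
  also have "\<dots> \<le> ereal \<sigma> * ereal (real k + 1)"
    using dist_through_edge \<open>0 \<le> \<sigma>\<close> by (intro ereal_mult_left_mono) auto
  finally show False using assms(4) by simp
qed

end

lemma (in girth_tree) card_EFT_ASPT_ge:
  assumes H: "is_EFT_ASPT (2 * N) edges weight 1 f \<sigma> H"
    and "L \<le> f" "0 \<le> \<sigma>" "\<sigma> * (real k + 1) < real (3 * k + 1)"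
  shows "card E0 \<le> card H"
proof -
  have "lifted_edges \<subseteq> H"
  proof
    fix e assume "e \<in> lifted_edges"
    then obtain p q where pq: "e = {N + p, N + q}" "{p, q} \<in> E0" "p \<noteq> q" "p < \<eta>" "q < \<eta>"
      by (rule lifted_edgeE)
    interpret girth_tree_edge k \<eta> L E0 p q by unfold_locales (rule pq(2))
    show "e \<in> H" using edge_mem_EFT_ASPT[OF assms] pq(1) unfolding a_def b_def by simp
  qed
  moreover have "finite H" using H finite_edges finite_subset unfolding is_EFT_ASPT_def by blast
  ultimately show ?thesis using card_mono card_lifted_edges by (metis (no_types))
qed

section \<open>Infinitely many hard instances\<close>

lemma exists_two_power_bracket: "1 \<le> (n::nat) \<Longrightarrow> \<exists>L. n \<le> 2 ^ L \<and> 2 ^ L < 2 * n"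
proof (induction n)
  case (Suc n)
  show ?case
  proof (cases "n = 0")
    case False
    then obtain L where L: "n \<le> 2 ^ L" "2 ^ L < 2 * n" using Suc.IH by auto
    show ?thesis
    proof (cases "Suc n \<le> 2 ^ L")
      case True
      then show ?thesis using L by (intro exI[of _ L]) simp
    next
      case False
      then have "n = 2 ^ L" using L by simp
      then show ?thesis using \<open>n \<noteq> 0\<close> by (intro exI[of _ "Suc L"]) simp
    qed
  qed (intro exI[of _ 0], simp)
qed simp

lemma powr_le_16_times_powr:
  fixes x y p :: real
  assumes "0 \<le> x" "x \<le> 4 * y" "0 \<le> p" "p \<le> 2"
  shows "x powr p \<le> 16 * y powr p"
proof -
  have "x powr p \<le> (4 * y) powr p" using assms by (intro powr_mono2) auto
  also have "\<dots> = 4 powr p * y powr p" using assms by (simp add: powr_mult)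
  also have "\<dots> \<le> 4 powr 2 * y powr p" using assms by (intro mult_right_mono powr_mono) auto
  finally show ?thesis by simp
qed

lemma infinite_by_dominance:
  fixes A B :: "nat set"
  assumes "infinite A" and "\<And>a. a \<in> A \<Longrightarrow> m \<le> a \<Longrightarrow> \<exists>b\<in>B. a \<le> b"
  shows "infinite B"
  unfolding infinite_nat_iff_unbounded_le
proof
  fix j
  obtain a where "a \<in> A" "max j m \<le> a" using assms(1) unfolding infinite_nat_iff_unbounded_le by blast
  moreover from this obtain b where "b \<in> B" "a \<le> b" using assms(2)[of a] by auto
  ultimately show "\<exists>b\<ge>j. b \<in> B" by (meson max.boundedE order_trans)
qed

definition dense_high_girth_graph :: "nat \<Rightarrow> real \<Rightarrow> nat \<Rightarrow> bool" where
  "dense_high_girth_graph k c \<eta> \<longleftrightarrow> (\<exists>E. is_graph \<eta> E \<and> girth E = enat (2 * k + 2) \<and>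
     real (card E) \<ge> c * real \<eta> powr (1 + 1 / real k))"

definition hard_ASPT_instance :: "nat \<Rightarrow> real \<Rightarrow> nat \<Rightarrow> bool" where
  "hard_ASPT_instance k c n \<longleftrightarrow> (\<exists>E w s. is_graph n E \<and> (\<forall>e \<in> E. w e \<ge> 0) \<and> s < n \<and>
     (\<forall>(f::nat) (\<sigma>::real) H.
        real f \<ge> log 2 (real n) \<and> 1 \<le> \<sigma> \<and> \<sigma> < (3 * real k + 1) / (real k + 1) \<and>
        is_EFT_ASPT n E w s f \<sigma> H
        \<longrightarrow> real (card H) \<ge> c * real n powr (1 + 1 / real k)))"

lemma (in girth_tree) hard_ASPT_instance_on_tree:
  assumes "1 \<le> k" "0 \<le> c" "2 ^ L < 2 * \<eta>"
    and dense: "c * real \<eta> powr (1 + 1 / real k) \<le> real (card E0)"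
  shows "hard_ASPT_instance k (c / 16) (2 * N)"
  unfolding hard_ASPT_instance_def
proof (intro exI conjI allI impI)
  fix f \<sigma> H
  assume A: "real f \<ge> log 2 (real (2 * N)) \<and> 1 \<le> \<sigma> \<and> \<sigma> < (3 * real k + 1) / (real k + 1) \<and>
    is_EFT_ASPT (2 * N) edges weight 1 f \<sigma> H"
  let ?p = "1 + 1 / real k"
  have "real (2 * N) = 2 ^ Suc L" unfolding N_def by simp
  then have "log 2 (real (2 * N)) = real (Suc L)" by (simp only: log_pow_cancel)
  then have "L \<le> f" using A by simp
  moreover have "\<sigma> * (real k + 1) < real (3 * k + 1)" using A by (simp add: field_simps)
  moreover have "is_EFT_ASPT (2 * N) edges weight 1 f \<sigma> H" and "0 \<le> \<sigma>" using A by auto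
  ultimately have card: "card E0 \<le> card H" using card_EFT_ASPT_ge by blast
  have "2 * N \<le> 4 * \<eta>" using assms(3) unfolding N_def by simp
  then have "real (2 * N) \<le> 4 * real \<eta>" using of_nat_mono[of "2 * N" "4 * \<eta>"] by simp
  then have "real (2 * N) powr ?p \<le> 16 * real \<eta> powr ?p"
    using assms(1) by (intro powr_le_16_times_powr) auto
  then have "c / 16 * real (2 * N) powr ?p \<le> c / 16 * (16 * real \<eta> powr ?p)"
    using assms(2) by (intro mult_left_mono) auto
  also have "\<dots> \<le> real (card E0)" using dense by simp
  also have "\<dots> \<le> real (card H)" using card by simp
  finally show "c / 16 * real (2 * N) powr ?p \<le> real (card H)" .
next
  show "1 < 2 * N" unfolding N_def using zero_less_power[of "2::nat" L] by linarith
qed (use is_graph_edges weight_nonneg in auto)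

lemma infinite_hard_ASPT_instances:
  assumes "1 \<le> k" "0 \<le> c" and "infinite {\<eta>. dense_high_girth_graph k c \<eta>}"
  shows "infinite {n. hard_ASPT_instance k (c / 16) n}"
proof (rule infinite_by_dominance[OF assms(3), of 1])
  fix \<eta> assume "\<eta> \<in> {\<eta>. dense_high_girth_graph k c \<eta>}" "1 \<le> \<eta>"
  then obtain E0 where E0: "is_graph \<eta> E0" "girth E0 = enat (2 * k + 2)"
    "c * real \<eta> powr (1 + 1 / real k) \<le> real (card E0)"
    unfolding dense_high_girth_graph_def by blast
  obtain L where L: "\<eta> \<le> 2 ^ L" "2 ^ L < 2 * \<eta>"
    using exists_two_power_bracket \<open>1 \<le> \<eta>\<close> by blast
  interpret girth_tree k \<eta> L E0 using E0 L by unfold_locales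
  have "hard_ASPT_instance k (c / 16) (2 * N)" using hard_ASPT_instance_on_tree assms E0 L by blast
  moreover have "\<eta> \<le> 2 * N" using L unfolding N_def by simp
  ultimately show "\<exists>n\<in>{n. hard_ASPT_instance k (c / 16) n}. \<eta> \<le> n" by blast
qed

theorem mainTheorem8:
  assumes girth_conj:
    "\<forall>k::nat. k \<ge> 1 \<longrightarrow> (\<exists>c::real. c > 0 \<and>
       infinite {\<eta>::nat. \<exists>E. is_graph \<eta> E \<and> girth E = enat (2 * k + 2) \<and>
                    real (card E) \<ge> c * real \<eta> powr (1 + 1 / real k)})"
  shows
    "\<forall>k::nat. k \<ge> 1 \<longrightarrow> (\<exists>c::real. c > 0 \<and>
       infinite {n::nat. \<exists>E w s. is_graph n E \<and> (\<forall>e \<in> E. w e \<ge> 0) \<and> s < n \<and>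
          (\<forall>(f::nat) (\<sigma>::real) H.
             real f \<ge> log 2 (real n) \<and> 1 \<le> \<sigma> \<and> \<sigma> < (3 * real k + 1) / (real k + 1) \<and>
             is_EFT_ASPT n E w s f \<sigma> H
             \<longrightarrow> real (card H) \<ge> c * real n powr (1 + 1 / real k))})"
proof -
  have "\<forall>k::nat. k \<ge> 1 \<longrightarrow> (\<exists>c>0. infinite {n. hard_ASPT_instance k c n})"
  proof (intro allI impI)
    fix k :: nat assume "1 \<le> k"
    obtain c where "0 < c" and "infinite {\<eta>. dense_high_girth_graph k c \<eta>}"
      using girth_conj \<open>1 \<le> k\<close> unfolding dense_high_girth_graph_def by blast
    then show "\<exists>c>0. infinite {n. hard_ASPT_instance k c n}"
      using infinite_hard_ASPT_instances \<open>1 \<le> k\<close> by (intro exI[of _ "c / 16"]) simp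
  qed
  then show ?thesis unfolding hard_ASPT_instance_def .
qed

end
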